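(* Let $\lambda>0$ and let $\Sigma\in\mathbb{R}^{d\times d}$ ($d\ge 2$) be symmetric positive definite with simple spectrum $\sigma_1>\cdots>\sigma_d>0$ and unit eigenvectors $u_1,\dots,u_d$. Let \[ \mathcal{R}_{\mathrm{soft},\infty}(\mu)=\operatorname{tr}(\Sigma)-2\lambda\,\mu^\top\Sigma^2\mu+\lambda^2(\mu^\top\Sigma\mu)(\mu^\top\Sigma^2\mu). \] Then $\mathcal{R}_{\mathrm{soft},\infty}$ satisfies the Łojasiewicz inequality with exponent $1/2$ at each of its critical points. Moreover, let $\mu^\star\in\{\pm u_1/\sqrt{\lambda\sigma_1}\}$ and let $\mu_\infty$ be a solution of $\dot\mu_\infty=-\nabla\mathcal{R}_{\mathrm{soft},\infty}(\mu_\infty)$ with $\mu_\infty(t)\to\mu^\star$. Then there exist $t_0\ge0$ and $s>0$ such that for all $t\ge t_0$, \[ \mathcal{R}_{\mathrm{soft},\infty}(\mu_\infty(t))-\mathcal{R}_{\mathrm{soft},\infty}(\mu^\star)\le\big(\mathcal{R}_{\mathrm{soft},\infty}(\mu_\infty(t_0))-\mathcal{R}_{\mathrm{soft},\infty}(\mu^\star)\big)e^{-s(t-t_0)}, \] and for every sufficiently small $\varepsilon>0$ there exists $t_0>0$ such that $\|\mu_\infty(t)-\mu^\star\|=\mathcal{O}\big(e^{-(\tilde s-\varepsilon)(t-t_0)}\big)$ as $t\to\infty$, where \[ \tilde s=\sigma_{\min}\big(\nabla^2\mathcal{R}_{\mathrm{soft},\infty}(\mu^\star)\big)=2\lambda\min\{\sigma_2(\sigma_1-\sigma_2),\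 \sigma_d(\sigma_1-\sigma_d)\}>0. \]
   Context: A differentiable $f:\mathbb{R}^d\to\mathbb{R}$ satisfies the Łojasiewicz inequality with exponent $\alpha\in[0,1)$ at a critical point $\mu^\star$ if there exist $C>0$ and a neighborhood $U$ of $\mu^\star$ with $\|\nabla f(\mu)\|\ge C|f(\mu)-f(\mu^\star)|^\alpha$ for all $\mu\in U$. $\sigma_{\min}(A)$ denotes the smallest eigenvalue of a symmetric matrix $A$. *)

theory Defs
  imports "HOL-Analysis.Analysis" "HOL-Library.Landau_Symbols"
begin

definition gradient :: "(real^'n \<Rightarrow> real) \<Rightarrow> real^'n \<Rightarrow> real^'n" where
  "gradient f x = (THE g. (f has_derivative (\<lambda>h. g \<bullet> h)) (at x))"

definition hessian :: "(real^'n \<Rightarrow> real) \<Rightarrow> real^'n \<Rightarrow> real^'n^'n" where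
  "hessian f x = (\<chi> i j. gradient (\<lambda>y. gradient f y $ i) x $ j)"

definition sigma_min :: "real^'n^'n \<Rightarrow> real" where
  "sigma_min A = Min {c. \<exists>v. v \<noteq> 0 \<and> A *v v = c *\<^sub>R v}"

definition lojasiewicz :: "(real^'n \<Rightarrow> real) \<Rightarrow> real \<Rightarrow> real^'n \<Rightarrow> bool" where
  "lojasiewicz f \<alpha> x0 \<longleftrightarrow> (\<exists>C>0. \<exists>U. open U \<and> x0 \<in> U \<and>
      (\<forall>x\<in>U. norm (gradient f x) \<ge> C * \<bar>f x - f x0\<bar> powr \<alpha>))"

definition R_soft :: "real \<Rightarrow> real^'n^'n \<Rightarrow> real^'n \<Rightarrow> real" where
  "R_soft lam S \<mu> = trace S - 2 * lam * (\<mu> \<bullet> ((S ** S) *v \<mu>))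
     + lam\<^sup>2 * (\<mu> \<bullet> (S *v \<mu>)) * (\<mu> \<bullet> ((S ** S) *v \<mu>))"

end

theory Submission
  imports Defs
begin

text \<open>
  The gradient of R = R_soft is diagonal in the eigenbasis u_1, ..., u_d of \<Sigma>: its k-th
  coordinate is \<sigma>_k (\<alpha> + \<beta> \<sigma>_k) \<mu>_k, where \<alpha> = 2 \<lambda>^2 \<mu>' \<Sigma>^2 \<mu> and
  \<beta> = 2 \<lambda>^2 \<mu>' \<Sigma> \<mu> - 4 \<lambda> depend on \<mu> only through two quadratic forms. As the \<sigma>_k are
  distinct, a critical point \<mu> \<noteq> 0 has a single nonzero coordinate: \<mu> = t u_i with
  \<lambda> t^2 \<sigma>_i = 1. At every critical point the Hessian is diagonal in the same basis, with
  eigenvalues -4 \<lambda> \<sigma>_j^2 at the origin and 8 \<lambda> \<sigma>_i^2, 2 \<lambda> \<sigma>_j (\<sigma>_i - \<sigma>_j) (j \<noteq> i)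
  at t u_i, all nonzero.

  Near a critical point with invertible Hessian the gradient grows linearly and the value at
  most quadratically in the distance, which is the Lojasiewicz inequality with exponent 1/2.
  Along the flow, (R - R*)' = -|\<nabla>R|^2 \<le> -C^2 (R - R*), so the excess risk decays
  exponentially. At \<mu>* = t u_1 the smallest Hessian eigenvalue is attained at j = 2 or j = d,
  because x (\<sigma>_1 - x) is concave; linearising the flow around \<mu>* then gives
  (|\<mu> - \<mu>*|^2)' \<le> -2 (s - \<epsilon>) |\<mu> - \<mu>*|^2 once \<mu> is close enough to \<mu>*.
\<close>

section \<open>Gradient flows and the Lojasiewicz inequality\<close>

lemma exp_decay_of_differential_inequality:
  fixes \<phi> \<phi>' :: "real \<Rightarrow> real"
  assumes deriv: "\<And>t. t \<ge> t0 \<Longrightarrow> (\<phi> has_real_derivative \<phi>' t) (at t)"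
    and decay: "\<And>t. t \<ge> t0 \<Longrightarrow> \<phi>' t \<le> - s * \<phi> t"
    and "t \<ge> t0"
  shows "\<phi> t \<le> \<phi> t0 * exp (- s * (t - t0))"
proof -
  define \<psi> where "\<psi> t = \<phi> t * exp (s * (t - t0))" for t
  have \<psi>_deriv: "(\<psi> has_real_derivative (\<phi>' t + s * \<phi> t) * exp (s * (t - t0))) (at t)"
    if "t \<ge> t0" for t
    unfolding \<psi>_def using deriv[OF that]
    by (auto intro!: derivative_eq_intros simp: algebra_simps)
  have "\<psi> t \<le> \<psi> t0"
  proof (rule DERIV_nonpos_imp_decreasing_open[OF \<open>t \<ge> t0\<close>])
    show "\<exists>y. DERIV \<psi> x :> y \<and> y \<le> 0" if "t0 < x" for x
      using \<psi>_deriv[of x] decay[of x] that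
      by (intro exI[of _ "(\<phi>' x + s * \<phi> x) * exp (s * (x - t0))"])
        (simp add: mult_nonpos_nonneg)
    show "continuous_on {t0..t} \<psi>"
      using \<psi>_deriv by (intro DERIV_atLeastAtMost_imp_continuous_on) auto
  qed
  then have "\<phi> t * exp (s * (t - t0)) * exp (- s * (t - t0)) \<le> \<phi> t0 * exp (- s * (t - t0))"
    unfolding \<psi>_def by (intro mult_right_mono) auto
  then show ?thesis
    by (simp add: mult.assoc exp_add[symmetric])
qed

lemma has_vector_derivative_at_of_within_nonneg:
  assumes "(m has_vector_derivative v) (at t within {0..})" and "t > 0"
  shows "(m has_vector_derivative v) (at t)"
proof -
  have "at t within {0..} = at t"
    using \<open>t > 0\<close> by (intro at_within_interior) simp
  then show ?thesis
    using assms(1) by simp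
qed

lemma gradient_flow_value_decay:
  fixes f :: "real^'n \<Rightarrow> real"
  assumes grad: "\<And>x. (f has_derivative (\<lambda>h. gradient f x \<bullet> h)) (at x)"
    and flow: "\<And>t. t \<ge> 0 \<Longrightarrow> (m has_vector_derivative - gradient f (m t)) (at t within {0..})"
    and conv: "(m \<longlongrightarrow> xs) at_top"
    and loj: "lojasiewicz f (1/2) xs"
  shows "\<exists>t0\<ge>0. \<exists>s>0. \<forall>t\<ge>t0. f (m t) - f xs \<le> (f (m t0) - f xs) * exp (- s * (t - t0))"
proof -
  from loj obtain C U where "C > 0" "open U" "xs \<in> U"
    and ineq: "\<And>x. x \<in> U \<Longrightarrow> C * \<bar>f x - f xs\<bar> powr (1/2) \<le> norm (gradient f x)"
    unfolding lojasiewicz_def by blast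
  obtain N where N: "\<And>t. t \<ge> N \<Longrightarrow> m t \<in> U"
    using topological_tendstoD[OF conv \<open>open U\<close> \<open>xs \<in> U\<close>]
    by (auto simp: eventually_at_top_linorder)
  define t0 where "t0 = max N 1"
  have "f (m t) - f xs \<le> (f (m t0) - f xs) * exp (- C\<^sup>2 * (t - t0))" if "t \<ge> t0" for t
  proof (rule exp_decay_of_differential_inequality[OF _ _ that])
    fix t assume "t \<ge> t0"
    then have "t > 0" and "m t \<in> U"
      using N unfolding t0_def by auto
    have "(m has_vector_derivative - gradient f (m t)) (at t)"
      using flow \<open>t > 0\<close> by (auto intro: has_vector_derivative_at_of_within_nonneg)
    from vector_derivative_diff_chain_within[OF this has_derivative_at_withinI[OF grad]]
    have "((\<lambda>t. f (m t)) has_real_derivative gradient f (m t) \<bullet> - gradient f (m t)) (at t)"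
      by (simp add: has_real_derivative_iff_has_vector_derivative o_def)
    from DERIV_diff[OF this DERIV_const[of "f xs"]]
    show "((\<lambda>t. f (m t) - f xs) has_real_derivative - (norm (gradient f (m t)))\<^sup>2) (at t)"
      by (simp add: power2_norm_eq_inner)
    have "C * sqrt \<bar>f (m t) - f xs\<bar> \<le> norm (gradient f (m t))"
      using ineq[OF \<open>m t \<in> U\<close>] by (simp add: powr_half_sqrt)
    then have "(C * sqrt \<bar>f (m t) - f xs\<bar>)\<^sup>2 \<le> (norm (gradient f (m t)))\<^sup>2"
      using \<open>C > 0\<close> by (intro power_mono) auto
    moreover have "C\<^sup>2 * (f (m t) - f xs) \<le> (C * sqrt \<bar>f (m t) - f xs\<bar>)\<^sup>2"
      by (simp add: power_mult_distrib mult_left_mono)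
    ultimately show "- (norm (gradient f (m t)))\<^sup>2 \<le> - C\<^sup>2 * (f (m t) - f xs)"
      by linarith
  qed
  moreover have "t0 \<ge> 0" "C\<^sup>2 > 0"
    using \<open>C > 0\<close> unfolding t0_def by auto
  ultimately show ?thesis by blast
qed

lemma gradient_flow_distance_decay:
  fixes G L :: "'a::real_inner \<Rightarrow> 'a"
  assumes flow: "\<And>t. t \<ge> 0 \<Longrightarrow> (m has_vector_derivative - G (m t)) (at t within {0..})"
    and conv: "(m \<longlongrightarrow> xs) at_top"
    and crit: "G xs = 0"
    and deriv: "(G has_derivative L) (at xs)"
    and coercive: "\<And>h. c * (norm h)\<^sup>2 \<le> h \<bullet> L h"
    and "\<epsilon> > 0"
  shows "\<exists>t0>0. (\<lambda>t. norm (m t - xs)) \<in> O[at_top](\<lambda>t. exp (- (c - \<epsilon>) * (t - t0)))"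
proof -
  obtain r where "r > 0"
    and lin: "\<And>x. norm (x - xs) < r \<Longrightarrow> norm (G x - L (x - xs)) \<le> \<epsilon> * norm (x - xs)"
    using deriv \<open>\<epsilon> > 0\<close> crit unfolding has_derivative_at_alt by force
  obtain N where N: "\<And>t. t \<ge> N \<Longrightarrow> norm (m t - xs) < r"
    using tendstoD[OF conv \<open>r > 0\<close>] by (auto simp: eventually_at_top_linorder dist_norm)
  define t0 where "t0 = max N 1"
  have sq: "(norm (m t - xs))\<^sup>2 \<le> (norm (m t0 - xs))\<^sup>2 * exp (- (2 * (c - \<epsilon>)) * (t - t0))"
    if "t \<ge> t0" for t
  proof (rule exp_decay_of_differential_inequality[OF _ _ that])
    fix t assume "t \<ge> t0"
    then have "t > 0" and near: "norm (m t - xs) < r"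
      using N unfolding t0_def by auto
    let ?e = "m t - xs"
    have "(m has_vector_derivative - G (m t)) (at t)"
      using flow \<open>t > 0\<close> by (auto intro: has_vector_derivative_at_of_within_nonneg)
    then have "((\<lambda>t. m t - xs) has_derivative (\<lambda>h. h *\<^sub>R - G (m t))) (at t)"
      unfolding has_vector_derivative_def by (auto intro!: derivative_eq_intros)
    from has_derivative_inner[OF this this]
    show "((\<lambda>t. (norm (m t - xs))\<^sup>2) has_real_derivative - 2 * (?e \<bullet> G (m t))) (at t)"
      unfolding power2_norm_eq_inner
      by (rule has_derivative_imp_has_field_derivative) (simp add: inner_commute algebra_simps)
    have "\<bar>?e \<bullet> (G (m t) - L ?e)\<bar> \<le> norm ?e * (\<epsilon> * norm ?e)"
      using Cauchy_Schwarz_ineq2 lin[OF near] by (meson mult_left_mono norm_ge_zero order_trans)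
    then have "(c - \<epsilon>) * (norm ?e)\<^sup>2 \<le> ?e \<bullet> G (m t)"
      using coercive[of ?e] by (simp add: power2_eq_square algebra_simps)
    then show "- 2 * (?e \<bullet> G (m t)) \<le> - (2 * (c - \<epsilon>)) * (norm ?e)\<^sup>2"
      by (simp add: algebra_simps)
  qed
  have "norm (m t - xs) \<le> norm (m t0 - xs) * exp (- (c - \<epsilon>) * (t - t0))" if "t \<ge> t0" for t
  proof (rule power2_le_imp_le)
    show "(norm (m t - xs))\<^sup>2 \<le> (norm (m t0 - xs) * exp (- (c - \<epsilon>) * (t - t0)))\<^sup>2"
      using sq[OF that] by (simp add: exp_double[symmetric] algebra_simps)
  qed simp
  then have "(\<lambda>t. norm (m t - xs)) \<in> O[at_top](\<lambda>t. exp (- (c - \<epsilon>) * (t - t0)))"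
    by (intro bigoI[where c = "norm (m t0 - xs)"]) (auto simp: eventually_at_top_linorder)
  moreover have "t0 > 0"
    unfolding t0_def by simp
  ultimately show ?thesis by blast
qed

lemma quadratic_value_bound_of_linear_gradient_bound:
  fixes f :: "real^'n \<Rightarrow> real"
  assumes grad: "\<And>x. (f has_derivative (\<lambda>h. gradient f x \<bullet> h)) (at x)"
    and bound: "\<And>y. y \<in> ball x0 r \<Longrightarrow> norm (gradient f y) \<le> B * norm (y - x0)"
    and "B \<ge> 0" and x: "x \<in> ball x0 r"
  shows "\<bar>f x - f x0\<bar> \<le> B * (norm (x - x0))\<^sup>2"
proof -
  have "norm (f x - f x0) \<le> B * norm (x - x0) * norm (x - x0)"
  proof (rule differentiable_bound[of "closed_segment x0 x"])
    fix y assume y: "y \<in> closed_segment x0 x"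
    have "x0 \<in> ball x0 r"
      using le_less_trans[OF zero_le_dist x[unfolded mem_ball]] by simp
    with y have "y \<in> ball x0 r"
      using closed_segment_subset[of x0 "ball x0 r" x] x by auto
    then have "norm (gradient f y) \<le> B * norm (y - x0)"
      by (rule bound)
    also have "\<dots> \<le> B * norm (x - x0)"
      using segment_bound(1)[OF y] \<open>B \<ge> 0\<close> by (intro mult_left_mono) auto
    finally show "onorm (\<lambda>h. gradient f y \<bullet> h) \<le> B * norm (x - x0)"
      using onorm_inner_right[OF bounded_linear_ident, of "gradient f y"] by (simp add: onorm_id)
    show "(f has_derivative (\<lambda>h. gradient f y \<bullet> h)) (at y within closed_segment x0 x)"
      using grad by (rule has_derivative_at_withinI)
  qed auto
  then show ?thesis
    by (simp add: power2_eq_square mult.assoc)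
qed

lemma lojasiewicz_half_at_nondegenerate_critical_point:
  fixes f :: "real^'n \<Rightarrow> real"
  assumes grad: "\<And>x. (f has_derivative (\<lambda>h. gradient f x \<bullet> h)) (at x)"
    and crit: "gradient f x0 = 0"
    and deriv: "(gradient f has_derivative L) (at x0)"
    and nondeg: "\<And>h. c * norm h \<le> norm (L h)" and "c > 0"
  shows "lojasiewicz f (1/2) x0"
proof -
  obtain K where "K > 0" and K: "\<And>h. norm (L h) \<le> norm h * K"
    using bounded_linear.pos_bounded[OF has_derivative_bounded_linear[OF deriv]] by blast
  have "\<forall>e>0. \<exists>r>0. \<forall>x. norm (x - x0) < r \<longrightarrow> norm (gradient f x - L (x - x0)) \<le> e * norm (x - x0)"
    using deriv crit unfolding has_derivative_at_alt by simp
  then obtain r where "r > 0" and lin: "\<And>x. norm (x - x0) < r \<Longrightarrow>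
      norm (gradient f x - L (x - x0)) \<le> c / 2 * norm (x - x0)"
    using \<open>c > 0\<close> half_gt_zero by blast
  define B where "B = K + c / 2"
  have lower: "c / 2 * norm (x - x0) \<le> norm (gradient f x)"
    and upper: "norm (gradient f x) \<le> B * norm (x - x0)" if "x \<in> ball x0 r" for x
  proof -
    have "norm (x - x0) < r"
      using that by (simp add: dist_norm norm_minus_commute)
    then have "norm (gradient f x - L (x - x0)) \<le> c / 2 * norm (x - x0)"
      by (rule lin)
    moreover have "norm (L (x - x0)) \<le> norm (gradient f x) + norm (gradient f x - L (x - x0))"
      using norm_triangle_sub[of "L (x - x0)" "gradient f x"] by (simp add: norm_minus_commute)
    moreover have "norm (gradient f x) \<le> norm (L (x - x0)) + norm (gradient f x - L (x - x0))"
      using norm_triangle_sub[of "gradient f x" "L (x - x0)"] by simp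
    ultimately show "c / 2 * norm (x - x0) \<le> norm (gradient f x)"
      and "norm (gradient f x) \<le> B * norm (x - x0)"
      using nondeg[of "x - x0"] K[of "x - x0"] unfolding B_def by (simp_all add: algebra_simps)
  qed
  define C where "C = c / (2 * sqrt B)"
  have "C * \<bar>f x - f x0\<bar> powr (1/2) \<le> norm (gradient f x)" if "x \<in> ball x0 r" for x
  proof -
    have "\<bar>f x - f x0\<bar> \<le> B * (norm (x - x0))\<^sup>2"
      using \<open>K > 0\<close> \<open>c > 0\<close> upper that unfolding B_def
      by (intro quadratic_value_bound_of_linear_gradient_bound[OF grad]) auto
    then have "\<bar>f x - f x0\<bar> powr (1/2) \<le> sqrt B * norm (x - x0)"
      by (metis powr_half_sqrt abs_ge_zero real_sqrt_le_mono real_sqrt_mult real_sqrt_abs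
          abs_norm_cancel)
    then have "C * \<bar>f x - f x0\<bar> powr (1/2) \<le> c / 2 * norm (x - x0)"
      using \<open>K > 0\<close> \<open>c > 0\<close> unfolding C_def B_def by (simp add: field_simps)
    then show ?thesis
      using lower[OF that] by linarith
  qed
  moreover have "C > 0"
    using \<open>K > 0\<close> \<open>c > 0\<close> unfolding C_def B_def by simp
  ultimately show ?thesis
    unfolding lojasiewicz_def using \<open>r > 0\<close> by (intro exI[of _ C] conjI exI[of _ "ball x0 r"]) auto
qed

section \<open>Derivatives of the soft risk\<close>

lemma gradient_eqI:
  assumes "(f has_derivative (\<lambda>h. g \<bullet> h)) (at x)"
  shows "gradient f x = g"
  unfolding gradient_def
proof (rule the_equality[where P = "\<lambda>g. (f has_derivative (\<lambda>h. g \<bullet> h)) (at x)", OF assms])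
  fix g' assume "(f has_derivative (\<lambda>h. g' \<bullet> h)) (at x)"
  from has_derivative_unique[OF this assms] have "g' \<bullet> (g' - g) = g \<bullet> (g' - g)"
    by metis
  then have "(g' - g) \<bullet> (g' - g) = 0"
    by (simp add: inner_diff_left)
  then show "g' = g" by simp
qed

lemma hessian_eqI:
  assumes grad: "\<And>y. (f has_derivative (\<lambda>h. G y \<bullet> h)) (at y)"
    and deriv: "(G has_derivative L) (at x)"
  shows "hessian f x = matrix L"
proof -
  have "gradient f = G"
    using gradient_eqI[OF grad] by blast
  moreover have "gradient (\<lambda>y. G y $ i) x = matrix L $ i" for i
  proof (rule gradient_eqI)
    have row: "(\<lambda>h. L h $ i) = (\<lambda>h. matrix L $ i \<bullet> h)"
      using matrix_vector_mul(3)[OF has_derivative_bounded_linear[OF deriv]]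
      by (metis matrix_vector_mul_component)
    show "((\<lambda>y. G y $ i) has_derivative (\<lambda>h. matrix L $ i \<bullet> h)) (at x)"
      unfolding row[symmetric]
      using bounded_linear.has_derivative[OF bounded_linear_vec_nth deriv] .
  qed
  ultimately show ?thesis
    unfolding hessian_def by (simp add: vec_eq_iff)
qed

lemma symmetric_matrix_inner:
  fixes A :: "real^'n^'n"
  assumes "transpose A = A"
  shows "(A *v x) \<bullet> y = x \<bullet> (A *v y)"
  by (metis assms dot_lmul_matrix transpose_matrix_vector)

lemma symmetric_matrix_square:
  fixes S :: "real^'n^'n"
  shows "transpose S = S \<Longrightarrow> transpose (S ** S) = S ** S"
  by (simp add: matrix_transpose_mul)

lemma has_derivative_quadratic_form:
  fixes A :: "real^'n^'n"
  assumes "transpose A = A"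
  shows "((\<lambda>x. x \<bullet> (A *v x)) has_derivative (\<lambda>h. 2 * ((A *v x) \<bullet> h))) (at x)"
proof -
  have "((\<lambda>x. x \<bullet> (A *v x)) has_derivative (\<lambda>h. x \<bullet> (A *v h) + h \<bullet> (A *v x))) (at x)"
    by (intro has_derivative_inner has_derivative_ident bounded_linear.has_derivative[OF
          matrix_vector_mul_bounded_linear])
  then show ?thesis
    using symmetric_matrix_inner[OF assms] by (simp add: inner_commute)
qed

definition soft_risk_gradient :: "real \<Rightarrow> real^'n^'n \<Rightarrow> real^'n \<Rightarrow> real^'n" where
  "soft_risk_gradient lam S \<mu> =
     (2 * lam\<^sup>2 * (\<mu> \<bullet> ((S ** S) *v \<mu>))) *\<^sub>R (S *v \<mu>)
     + (2 * lam\<^sup>2 * (\<mu> \<bullet> (S *v \<mu>)) - 4 * lam) *\<^sub>R ((S ** S) *v \<mu>)"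

definition soft_risk_hessian :: "real \<Rightarrow> real^'n^'n \<Rightarrow> real^'n \<Rightarrow> real^'n \<Rightarrow> real^'n" where
  "soft_risk_hessian lam S \<mu> h =
     (2 * lam\<^sup>2 * (\<mu> \<bullet> ((S ** S) *v \<mu>))) *\<^sub>R (S *v h)
     + (4 * lam\<^sup>2 * (((S ** S) *v \<mu>) \<bullet> h)) *\<^sub>R (S *v \<mu>)
     + (2 * lam\<^sup>2 * (\<mu> \<bullet> (S *v \<mu>)) - 4 * lam) *\<^sub>R ((S ** S) *v h)
     + (4 * lam\<^sup>2 * ((S *v \<mu>) \<bullet> h)) *\<^sub>R ((S ** S) *v \<mu>)"

lemma has_derivative_R_soft:
  assumes "transpose S = S"
  shows "(R_soft lam S has_derivative (\<lambda>h. soft_risk_gradient lam S \<mu> \<bullet> h)) (at \<mu>)"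
proof -
  note p = has_derivative_quadratic_form[OF assms]
    and q = has_derivative_quadratic_form[OF symmetric_matrix_square[OF assms]]
  show ?thesis
    unfolding R_soft_def[abs_def]
    by (rule has_derivative_eq_rhs, (rule has_derivative_add has_derivative_diff
          has_derivative_const has_derivative_mult_right has_derivative_mult p q)+)
      (simp add: fun_eq_iff soft_risk_gradient_def inner_add_left algebra_simps)
qed

lemma has_derivative_soft_risk_gradient:
  assumes "transpose S = S"
  shows "(soft_risk_gradient lam S has_derivative soft_risk_hessian lam S \<mu>) (at \<mu>)"
proof -
  note p = has_derivative_quadratic_form[OF assms]
    and q = has_derivative_quadratic_form[OF symmetric_matrix_square[OF assms]]
    and lin = bounded_linear_imp_has_derivative[OF matrix_vector_mul_bounded_linear]
  show ?thesis
    unfolding soft_risk_gradient_def[abs_def]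
    by (rule has_derivative_eq_rhs, (rule has_derivative_add has_derivative_diff
          has_derivative_const has_derivative_mult_right has_derivative_scaleR p q lin)+)
      (simp add: fun_eq_iff soft_risk_hessian_def algebra_simps)
qed

lemma gradient_R_soft:
  "transpose S = S \<Longrightarrow> gradient (R_soft lam S) = soft_risk_gradient lam S"
  using gradient_eqI[OF has_derivative_R_soft] by blast

lemma hessian_R_soft:
  "transpose S = S \<Longrightarrow> hessian (R_soft lam S) \<mu> = matrix (soft_risk_hessian lam S \<mu>)"
  by (rule hessian_eqI[OF has_derivative_R_soft has_derivative_soft_risk_gradient])

section \<open>Symmetric matrices with simple spectrum\<close>

locale simple_spectrum =
  fixes S :: "real^'n^'n" and d :: nat and \<sigma> :: "nat \<Rightarrow> real" and u :: "nat \<Rightarrow> real^'n"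
  assumes dimension: "d = CARD('n)"
    and symmetric: "transpose S = S"
    and eigenvalues_decreasing: "\<And>i j. 1 \<le> i \<Longrightarrow> i < j \<Longrightarrow> j \<le> d \<Longrightarrow> \<sigma> j < \<sigma> i"
    and last_eigenvalue_pos: "\<sigma> d > 0"
    and unit_eigenvectors: "\<And>i. 1 \<le> i \<Longrightarrow> i \<le> d \<Longrightarrow> S *v u i = \<sigma> i *\<^sub>R u i \<and> norm (u i) = 1"
begin

abbreviation I :: "nat set" where "I \<equiv> {1..d}"

lemma eigenvalue_pos: "i \<in> I \<Longrightarrow> \<sigma> i > 0"
  using eigenvalues_decreasing[of i d] last_eigenvalue_pos by (cases "i = d") auto

lemma eigenvalue_eq_iff: "i \<in> I \<Longrightarrow> j \<in> I \<Longrightarrow> \<sigma> i = \<sigma> j \<longleftrightarrow> i = j"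
  using eigenvalues_decreasing[of i j] eigenvalues_decreasing[of j i]
  by (cases i j rule: linorder_cases) auto

lemma eigenvector: "i \<in> I \<Longrightarrow> S *v u i = \<sigma> i *\<^sub>R u i"
  using unit_eigenvectors by simp

lemma eigenvector_square: "i \<in> I \<Longrightarrow> (S ** S) *v u i = (\<sigma> i)\<^sup>2 *\<^sub>R u i"
  by (simp add: matrix_vector_mul_assoc[symmetric] eigenvector matrix_vector_mult_scaleR
      power2_eq_square)

lemma inner_eigenvectors: "i \<in> I \<Longrightarrow> j \<in> I \<Longrightarrow> u i \<bullet> u j = (if i = j then 1 else 0)"
proof -
  assume ij: "i \<in> I" "j \<in> I"
  have "\<sigma> i * (u i \<bullet> u j) = \<sigma> j * (u i \<bullet> u j)"
    using symmetric_matrix_inner[OF symmetric, of "u i" "u j"] ij by (simp add: eigenvector)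
  then show ?thesis
    using ij eigenvalue_eq_iff unit_eigenvectors by (auto simp: norm_eq_1)
qed

lemma eigenbasis_expansion: "(\<Sum>j\<in>I. (x \<bullet> u j) *\<^sub>R u j) = x"
proof -
  have inj: "inj_on u I"
    by (rule inj_onI) (metis inner_eigenvectors zero_neq_one)
  have orth: "pairwise orthogonal (u ` I)"
    using inner_eigenvectors unfolding pairwise_def orthogonal_def by auto
  have unit: "\<And>v. v \<in> u ` I \<Longrightarrow> norm v = 1"
    using unit_eigenvectors by auto
  have "independent (u ` I)"
    using pairwise_orthogonal_independent[OF orth] unit by force
  moreover have "card (u ` I) = dim (UNIV :: (real^'n) set)"
    using card_image[OF inj] dimension by simp
  ultimately have "x \<in> span (u ` I)"
    using card_eq_dim[of "u ` I" UNIV] by auto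
  then have "(\<Sum>v\<in>u ` I. (x \<bullet> v) *\<^sub>R v) = x"
    using orth unit by (intro orthonormal_basis_expand) auto
  then show ?thesis
    using sum.reindex[OF inj, of "\<lambda>v. (x \<bullet> v) *\<^sub>R v"] by simp
qed

lemma inner_eigenbasis_sum: "k \<in> I \<Longrightarrow> (\<Sum>j\<in>I. a j *\<^sub>R u j) \<bullet> u k = a k"
  by (simp add: inner_sum_left inner_eigenvectors if_distrib cong: if_cong)

lemma eigenbasis_eqI:
  assumes "\<And>k. k \<in> I \<Longrightarrow> x \<bullet> u k = y \<bullet> u k"
  shows "x = y"
proof -
  have "(\<Sum>j\<in>I. (x \<bullet> u j) *\<^sub>R u j) = (\<Sum>j\<in>I. (y \<bullet> u j) *\<^sub>R u j)"
    using assms by simp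
  then show ?thesis
    by (simp only: eigenbasis_expansion)
qed

lemma inner_eq_eigenbasis_sum: "x \<bullet> y = (\<Sum>j\<in>I. (x \<bullet> u j) * (y \<bullet> u j))"
proof -
  have "x \<bullet> y = (\<Sum>j\<in>I. (x \<bullet> u j) *\<^sub>R u j) \<bullet> y"
    by (simp only: eigenbasis_expansion)
  also have "\<dots> = (\<Sum>j\<in>I. (x \<bullet> u j) * (u j \<bullet> y))"
    by (simp only: inner_sum_left inner_scaleR_left)
  finally show ?thesis
    by (simp add: inner_commute)
qed

lemma norm_eigenbasis_sum: "(norm x)\<^sup>2 = (\<Sum>j\<in>I. (x \<bullet> u j)\<^sup>2)"
  unfolding power2_norm_eq_inner inner_eq_eigenbasis_sum[of x x] by (simp add: power2_eq_square)

context
  fixes N :: "real^'n \<Rightarrow> real^'n" and \<nu> :: "nat \<Rightarrow> real"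
  assumes diag_linear: "linear N"
    and diag_eigenvector: "\<And>j. j \<in> I \<Longrightarrow> N (u j) = \<nu> j *\<^sub>R u j"
begin

lemma inner_diag_eigenvector: "k \<in> I \<Longrightarrow> N x \<bullet> u k = \<nu> k * (x \<bullet> u k)"
proof -
  assume k: "k \<in> I"
  have "N x = N (\<Sum>j\<in>I. (x \<bullet> u j) *\<^sub>R u j)"
    by (simp only: eigenbasis_expansion)
  also have "\<dots> = (\<Sum>j\<in>I. (\<nu> j * (x \<bullet> u j)) *\<^sub>R u j)"
    by (simp add: linear_sum[OF diag_linear] linear_scale[OF diag_linear] diag_eigenvector
        mult.commute)
  finally show ?thesis
    using inner_eigenbasis_sum[OF k] by simp
qed

lemma diag_eigenvalues: "{c. \<exists>v. v \<noteq> 0 \<and> N v = c *\<^sub>R v} = \<nu> ` I"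
proof (intro equalityI subsetI)
  fix c assume "c \<in> {c. \<exists>v. v \<noteq> 0 \<and> N v = c *\<^sub>R v}"
  then obtain v where "v \<noteq> 0" and v: "N v = c *\<^sub>R v"
    by auto
  then obtain k where k: "k \<in> I" and "v \<bullet> u k \<noteq> 0"
    using eigenbasis_eqI[of v 0] by auto
  moreover have "\<nu> k * (v \<bullet> u k) = c * (v \<bullet> u k)"
    by (metis inner_diag_eigenvector[OF k] v inner_scaleR_left)
  ultimately have "c = \<nu> k"
    by simp
  with k show "c \<in> \<nu> ` I"
    by blast
next
  fix c assume "c \<in> \<nu> ` I"
  then obtain j where "j \<in> I" "c = \<nu> j"
    by auto
  moreover have "u j \<noteq> 0"
    using unit_eigenvectors \<open>j \<in> I\<close> by force
  ultimately show "c \<in> {c. \<exists>v. v \<noteq> 0 \<and> N v = c *\<^sub>R v}"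
    using diag_eigenvector by blast
qed

lemma diag_quadratic_form_lower_bound:
  assumes "\<And>j. j \<in> I \<Longrightarrow> c \<le> \<nu> j"
  shows "c * (norm h)\<^sup>2 \<le> h \<bullet> N h"
proof -
  have "c * (norm h)\<^sup>2 = (\<Sum>j\<in>I. c * (h \<bullet> u j)\<^sup>2)"
    by (simp add: norm_eigenbasis_sum sum_distrib_left)
  also have "\<dots> \<le> (\<Sum>j\<in>I. \<nu> j * (h \<bullet> u j)\<^sup>2)"
    using assms by (intro sum_mono mult_right_mono) auto
  also have "\<dots> = h \<bullet> N h"
    by (simp add: inner_eq_eigenbasis_sum[of h "N h"] inner_diag_eigenvector power2_eq_square
        mult_ac)
  finally show ?thesis .
qed

lemma diag_nondegenerate:
  assumes "\<And>j. j \<in> I \<Longrightarrow> \<nu> j \<noteq> 0"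
  shows "\<exists>c>0. \<forall>h. c * norm h \<le> norm (N h)"
proof -
  define c where "c = Min ((\<lambda>j. \<bar>\<nu> j\<bar>) ` I)"
  have c_le: "c \<le> \<bar>\<nu> j\<bar>" if "j \<in> I" for j
    unfolding c_def using that by simp
  have "c > 0"
    unfolding c_def using assms dimension by (subst Min_gr_iff) auto
  have "(c * norm h)\<^sup>2 \<le> (norm (N h))\<^sup>2" for h
  proof -
    have "(c * norm h)\<^sup>2 = (\<Sum>j\<in>I. c\<^sup>2 * (h \<bullet> u j)\<^sup>2)"
      by (simp add: power_mult_distrib norm_eigenbasis_sum sum_distrib_left)
    also have "\<dots> \<le> (\<Sum>j\<in>I. (\<nu> j * (h \<bullet> u j))\<^sup>2)"
    proof (intro sum_mono)
      fix j assume "j \<in> I"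
      then have "c\<^sup>2 \<le> (\<nu> j)\<^sup>2"
        using c_le \<open>c > 0\<close> abs_le_square_iff[of c "\<nu> j"] by simp
      then show "c\<^sup>2 * (h \<bullet> u j)\<^sup>2 \<le> (\<nu> j * (h \<bullet> u j))\<^sup>2"
        by (simp add: power_mult_distrib mult_right_mono)
    qed
    also have "\<dots> = (norm (N h))\<^sup>2"
      by (simp add: norm_eigenbasis_sum[of "N h"] inner_diag_eigenvector)
    finally show ?thesis .
  qed
  then have "\<forall>h. c * norm h \<le> norm (N h)"
    by (meson norm_ge_zero power2_le_imp_le)
  with \<open>c > 0\<close> show ?thesis by blast
qed

end

lemma inner_eigenvector_matrix: "k \<in> I \<Longrightarrow> (S *v x) \<bullet> u k = \<sigma> k * (x \<bullet> u k)"
  by (rule inner_diag_eigenvector) (simp_all add: eigenvector)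

lemma matrix_on_axis:
  assumes "i \<in> I"
  shows "S *v (t *\<^sub>R u i) = (t * \<sigma> i) *\<^sub>R u i"
    and "(S ** S) *v (t *\<^sub>R u i) = (t * (\<sigma> i)\<^sup>2) *\<^sub>R u i"
  using assms by (simp_all add: matrix_vector_mult_scaleR eigenvector eigenvector_square)

end

section \<open>Critical points of the soft risk\<close>

lemma concave_product_ge_endpoint_min:
  fixes a x lo hi :: real
  assumes "lo \<le> x" and "x \<le> hi"
  shows "min (hi * (a - hi)) (lo * (a - lo)) \<le> x * (a - x)"
proof (cases "x + lo \<le> a")
  case True
  have "x * (a - x) - lo * (a - lo) = (x - lo) * (a - x - lo)"
    by (simp add: algebra_simps)
  moreover have "(x - lo) * (a - x - lo) \<ge> 0"
    using True assms by simp
  ultimately show ?thesis by linarith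
next
  case False
  have "x * (a - x) - hi * (a - hi) = (hi - x) * (x + hi - a)"
    by (simp add: algebra_simps)
  moreover have "(hi - x) * (x + hi - a) \<ge> 0"
    using False assms by simp
  ultimately show ?thesis by linarith
qed

locale soft_risk = simple_spectrum +
  fixes lam :: real
  assumes lam_pos: "lam > 0"
begin

lemma soft_risk_gradient_on_axis:
  assumes "i \<in> I"
  shows "soft_risk_gradient lam S (t *\<^sub>R u i)
    = (4 * lam * t * (\<sigma> i)\<^sup>2 * (lam * t\<^sup>2 * \<sigma> i - 1)) *\<^sub>R u i"
proof -
  have "soft_risk_gradient lam S (t *\<^sub>R u i) = (2 * lam\<^sup>2 * (t\<^sup>2 * (\<sigma> i)\<^sup>2) * (t * \<sigma> i)
      + (2 * lam\<^sup>2 * (t\<^sup>2 * \<sigma> i) - 4 * lam) * (t * (\<sigma> i)\<^sup>2)) *\<^sub>R u i"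
    unfolding soft_risk_gradient_def matrix_on_axis[OF assms]
    by (simp add: inner_eigenvectors[OF assms assms] scaleR_add_left power2_eq_square mult_ac)
  also have "\<dots> = (4 * lam * t * (\<sigma> i)\<^sup>2 * (lam * t\<^sup>2 * \<sigma> i - 1)) *\<^sub>R u i"
    by (rule arg_cong[where f = "\<lambda>c. c *\<^sub>R u i"]) (simp add: algebra_simps power2_eq_square)
  finally show ?thesis .
qed

lemma inner_soft_risk_gradient:
  assumes "k \<in> I"
  shows "soft_risk_gradient lam S x \<bullet> u k = \<sigma> k * (2 * lam\<^sup>2 * (x \<bullet> ((S ** S) *v x))
    + (2 * lam\<^sup>2 * (x \<bullet> (S *v x)) - 4 * lam) * \<sigma> k) * (x \<bullet> u k)"
  unfolding soft_risk_gradient_def matrix_vector_mul_assoc[symmetric]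
  using assms by (simp add: inner_eigenvector_matrix algebra_simps power2_eq_square)

lemma critical_point_on_axis:
  assumes crit: "soft_risk_gradient lam S x = 0"
  shows "\<exists>i\<in>I. \<exists>t. x = t *\<^sub>R u i"
proof (cases "x = 0")
  case True
  then show ?thesis
    using dimension by (intro bexI[of _ 1] exI[of _ 0]) auto
next
  case False
  then obtain i where i: "i \<in> I" and "x \<bullet> u i \<noteq> 0"
    using eigenbasis_eqI[of x 0] by auto
  define \<alpha> where "\<alpha> = 2 * lam\<^sup>2 * (x \<bullet> ((S ** S) *v x))"
  define \<beta> where "\<beta> = 2 * lam\<^sup>2 * (x \<bullet> (S *v x)) - 4 * lam"
  have coord: "\<alpha> + \<beta> * \<sigma> k = 0 \<or> x \<bullet> u k = 0" if "k \<in> I" for k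
    using inner_soft_risk_gradient[OF that, of x] crit eigenvalue_pos[OF that]
    unfolding \<alpha>_def \<beta>_def by simp
  have "(S *v x) \<bullet> u i \<noteq> 0"
    using inner_eigenvector_matrix[OF i] eigenvalue_pos[OF i] \<open>x \<bullet> u i \<noteq> 0\<close> by simp
  then have "x \<bullet> ((S ** S) *v x) > 0"
    using symmetric_matrix_inner[OF symmetric, of x "S *v x"]
    by (metis inner_gt_zero_iff inner_zero_left matrix_vector_mul_assoc)
  then have "\<beta> \<noteq> 0"
    using coord[OF i] \<open>x \<bullet> u i \<noteq> 0\<close> lam_pos unfolding \<alpha>_def by auto
  have "x \<bullet> u k = 0" if k: "k \<in> I" "k \<noteq> i" for k
  proof (rule ccontr)
    assume "x \<bullet> u k \<noteq> 0"
    then have "\<alpha> + \<beta> * \<sigma> i = 0" and "\<alpha> + \<beta> * \<sigma> k = 0"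
      using coord[OF i] coord[OF \<open>k \<in> I\<close>] \<open>x \<bullet> u i \<noteq> 0\<close> by auto
    then have "\<beta> * \<sigma> i = \<beta> * \<sigma> k"
      by linarith
    then show False
      using \<open>\<beta> \<noteq> 0\<close> eigenvalue_eq_iff[OF i \<open>k \<in> I\<close>] \<open>k \<noteq> i\<close> by simp
  qed
  then have "x = (x \<bullet> u i) *\<^sub>R u i"
    using inner_eigenvectors[OF i] by (intro eigenbasis_eqI) auto
  with i show ?thesis by blast
qed

lemma soft_risk_gradient_eq_0_iff:
  "soft_risk_gradient lam S x = 0 \<longleftrightarrow> x = 0 \<or> (\<exists>i\<in>I. \<exists>t. x = t *\<^sub>R u i \<and> lam * t\<^sup>2 * \<sigma> i = 1)"
proof -
  have "soft_risk_gradient lam S (t *\<^sub>R u i) = 0 \<longleftrightarrow> t = 0 \<or> lam * t\<^sup>2 * \<sigma> i = 1"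
    if "i \<in> I" for i t
  proof -
    have "u i \<noteq> 0"
      using unit_eigenvectors that by force
    then show ?thesis
      using soft_risk_gradient_on_axis[OF that] lam_pos eigenvalue_pos[OF that] by auto
  qed
  note axis = this
  show ?thesis
  proof
    assume crit: "soft_risk_gradient lam S x = 0"
    moreover obtain i t where "i \<in> I" "x = t *\<^sub>R u i"
      using critical_point_on_axis[OF crit] by blast
    ultimately show "x = 0 \<or> (\<exists>i\<in>I. \<exists>t. x = t *\<^sub>R u i \<and> lam * t\<^sup>2 * \<sigma> i = 1)"
      using axis by auto
  next
    assume "x = 0 \<or> (\<exists>i\<in>I. \<exists>t. x = t *\<^sub>R u i \<and> lam * t\<^sup>2 * \<sigma> i = 1)"
    then show "soft_risk_gradient lam S x = 0"
      using axis by (auto simp: soft_risk_gradient_def)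
  qed
qed

lemma soft_risk_hessian_origin:
  "j \<in> I \<Longrightarrow> soft_risk_hessian lam S 0 (u j) = (- 4 * lam * (\<sigma> j)\<^sup>2) *\<^sub>R u j"
  by (simp add: soft_risk_hessian_def eigenvector_square)

definition critical_hessian_eigenvalue :: "nat \<Rightarrow> nat \<Rightarrow> real" where
  "critical_hessian_eigenvalue i j =
     (if j = i then 8 * lam * (\<sigma> i)\<^sup>2 else 2 * lam * \<sigma> j * (\<sigma> i - \<sigma> j))"

lemma critical_hessian_eigenvalue_nonzero:
  "i \<in> I \<Longrightarrow> j \<in> I \<Longrightarrow> critical_hessian_eigenvalue i j \<noteq> 0"
  using lam_pos eigenvalue_pos[of i] eigenvalue_pos[of j] eigenvalue_eq_iff[of i j]
  by (auto simp: critical_hessian_eigenvalue_def)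

lemma soft_risk_hessian_at_critical_point:
  assumes i: "i \<in> I" and j: "j \<in> I" and crit: "lam * t\<^sup>2 * \<sigma> i = 1"
  shows "soft_risk_hessian lam S (t *\<^sub>R u i) (u j) = critical_hessian_eigenvalue i j *\<^sub>R u j"
proof (cases "j = i")
  case True
  have "u i \<bullet> u i = 1"
    using inner_eigenvectors[OF i i] by simp
  then have "soft_risk_hessian lam S (t *\<^sub>R u i) (u j) = (8 * lam * (\<sigma> i)\<^sup>2) *\<^sub>R u j"
    unfolding soft_risk_hessian_def matrix_on_axis[OF i] True eigenvector[OF i]
      eigenvector_square[OF i] inner_scaleR_left inner_scaleR_right scaleR_scaleR
      scaleR_add_left[symmetric]
    by (intro arg_cong[where f = "\<lambda>c. c *\<^sub>R u i"]) (use crit in algebra)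
  then show ?thesis
    using True by (simp add: critical_hessian_eigenvalue_def)
next
  case False
  have "soft_risk_hessian lam S (t *\<^sub>R u i) (u j)
      = (2 * lam\<^sup>2 * (t\<^sup>2 * (\<sigma> i)\<^sup>2) * \<sigma> j + (2 * lam\<^sup>2 * (t\<^sup>2 * \<sigma> i) - 4 * lam) * (\<sigma> j)\<^sup>2) *\<^sub>R u j"
    unfolding soft_risk_hessian_def matrix_on_axis[OF i] eigenvector[OF j] eigenvector_square[OF j]
    using False by (simp add: inner_eigenvectors[OF i i] inner_eigenvectors[OF i j] scaleR_add_left
        power2_eq_square mult_ac)
  also have "\<dots> = (2 * lam * \<sigma> j * (\<sigma> i - \<sigma> j)) *\<^sub>R u j"
    by (rule arg_cong[where f = "\<lambda>c. c *\<^sub>R u j"]) (use crit in algebra)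
  finally show ?thesis
    using False by (simp add: critical_hessian_eigenvalue_def)
qed

lemma linear_soft_risk_hessian: "linear (soft_risk_hessian lam S x)"
  using has_derivative_linear[OF has_derivative_soft_risk_gradient[OF symmetric]] .

lemma soft_risk_hessian_nondegenerate:
  assumes "soft_risk_gradient lam S x = 0"
  shows "\<exists>c>0. \<forall>h. c * norm h \<le> norm (soft_risk_hessian lam S x h)"
proof -
  obtain \<nu> where eig: "\<And>j. j \<in> I \<Longrightarrow> soft_risk_hessian lam S x (u j) = \<nu> j *\<^sub>R u j"
    and nz: "\<And>j. j \<in> I \<Longrightarrow> \<nu> j \<noteq> 0"
  proof (cases "x = 0")
    case True
    then show ?thesis
      using that[of "\<lambda>j. - 4 * lam * (\<sigma> j)\<^sup>2"] soft_risk_hessian_origin eigenvalue_pos lam_pos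
      by force
  next
    case False
    then obtain i t where i: "i \<in> I" and x: "x = t *\<^sub>R u i" and crit: "lam * t\<^sup>2 * \<sigma> i = 1"
      using assms soft_risk_gradient_eq_0_iff by blast
    show ?thesis
      using that[of "critical_hessian_eigenvalue i"] critical_hessian_eigenvalue_nonzero[OF i]
        soft_risk_hessian_at_critical_point[OF i _ crit] unfolding x by blast
  qed
  then show ?thesis
    by (rule diag_nondegenerate[OF linear_soft_risk_hessian])
qed

lemma lojasiewicz_at_critical_points:
  assumes "gradient (R_soft lam S) x = 0"
  shows "lojasiewicz (R_soft lam S) (1/2) x"
proof -
  note gradient = gradient_R_soft[OF symmetric]
  obtain c where "c > 0" and nondeg: "\<forall>h. c * norm h \<le> norm (soft_risk_hessian lam S x h)"
    using soft_risk_hessian_nondegenerate assms unfolding gradient by blast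
  show ?thesis
  proof (rule lojasiewicz_half_at_nondegenerate_critical_point)
    show "(R_soft lam S has_derivative (\<lambda>h. gradient (R_soft lam S) y \<bullet> h)) (at y)" for y
      unfolding gradient by (rule has_derivative_R_soft[OF symmetric])
    show "(gradient (R_soft lam S) has_derivative soft_risk_hessian lam S x) (at x)"
      unfolding gradient by (rule has_derivative_soft_risk_gradient[OF symmetric])
  qed (use assms \<open>c > 0\<close> nondeg in auto)
qed

lemma top_eigenvector_scaling:
  assumes "x \<in> {(1 / sqrt (lam * \<sigma> 1)) *\<^sub>R u 1, - ((1 / sqrt (lam * \<sigma> 1)) *\<^sub>R u 1)}"
  shows "\<exists>t. x = t *\<^sub>R u 1 \<and> lam * t\<^sup>2 * \<sigma> 1 = 1"
proof -
  define c where "c = 1 / sqrt (lam * \<sigma> 1)"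
  have "lam * c\<^sup>2 * \<sigma> 1 = 1"
    unfolding c_def using lam_pos eigenvalue_pos[of 1] dimension by (simp add: power_divide)
  moreover have "x = c *\<^sub>R u 1 \<or> x = (- c) *\<^sub>R u 1"
    using assms unfolding c_def by auto
  ultimately show ?thesis
    by (metis power2_minus)
qed

lemma critical_hessian_eigenvalue_top_min:
  assumes "d \<ge> 2"
  defines "s \<equiv> 2 * lam * min (\<sigma> 2 * (\<sigma> 1 - \<sigma> 2)) (\<sigma> d * (\<sigma> 1 - \<sigma> d))"
  shows "s > 0" and "\<And>j. j \<in> I \<Longrightarrow> s \<le> critical_hessian_eigenvalue 1 j"
    and "s \<in> critical_hessian_eigenvalue 1 ` I"
proof -
  have I: "1 \<in> I" "2 \<in> I" "d \<in> I"
    using \<open>d \<ge> 2\<close> by auto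
  have "\<sigma> 2 < \<sigma> 1" "\<sigma> d < \<sigma> 1" "0 < \<sigma> 2" "0 < \<sigma> d"
    using eigenvalues_decreasing[of 1 2] eigenvalues_decreasing[of 1 d] eigenvalue_pos I
      \<open>d \<ge> 2\<close> by auto
  then show "s > 0"
    unfolding s_def using lam_pos by simp
  show "s \<le> critical_hessian_eigenvalue 1 j" if "j \<in> I" for j
  proof (cases "j = 1")
    case True
    have "\<sigma> 2 * (\<sigma> 1 - \<sigma> 2) \<le> \<sigma> 1 * \<sigma> 1"
      using \<open>\<sigma> 2 < \<sigma> 1\<close> \<open>0 < \<sigma> 2\<close> by (intro mult_mono) auto
    then have "\<sigma> 2 * (\<sigma> 1 - \<sigma> 2) \<le> 4 * (\<sigma> 1 * \<sigma> 1)"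
      using zero_le_square[of "\<sigma> 1"] by linarith
    then show ?thesis
      unfolding s_def critical_hessian_eigenvalue_def using True lam_pos
      by (simp add: power2_eq_square min_le_iff_disj)
  next
    case False
    then have "\<sigma> d \<le> \<sigma> j" "\<sigma> j \<le> \<sigma> 2"
      using that eigenvalues_decreasing[of j d] eigenvalues_decreasing[of 2 j]
      by (cases "j = d"; cases "j = 2"; auto)+
    then show ?thesis
      using False lam_pos concave_product_ge_endpoint_min[of "\<sigma> d" "\<sigma> j" "\<sigma> 2" "\<sigma> 1"]
      unfolding s_def critical_hessian_eigenvalue_def by (simp add: mult.assoc)
  qed
  show "s \<in> critical_hessian_eigenvalue 1 ` I"
    using I \<open>d \<ge> 2\<close> unfolding s_def critical_hessian_eigenvalue_def min_def
    by (auto simp: mult.assoc)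
qed

lemma soft_risk_hessian_at_top:
  assumes "d \<ge> 2" and crit: "lam * t\<^sup>2 * \<sigma> 1 = 1"
  defines "s \<equiv> 2 * lam * min (\<sigma> 2 * (\<sigma> 1 - \<sigma> 2)) (\<sigma> d * (\<sigma> 1 - \<sigma> d))"
  shows "sigma_min (hessian (R_soft lam S) (t *\<^sub>R u 1)) = s"
    and "s * (norm h)\<^sup>2 \<le> h \<bullet> soft_risk_hessian lam S (t *\<^sub>R u 1) h"
proof -
  have eig: "soft_risk_hessian lam S (t *\<^sub>R u 1) (u j) = critical_hessian_eigenvalue 1 j *\<^sub>R u j"
    if "j \<in> I" for j
    using \<open>d \<ge> 2\<close> soft_risk_hessian_at_critical_point[OF _ that crit] by simp
  note s_min = critical_hessian_eigenvalue_top_min[OF \<open>d \<ge> 2\<close>, folded s_def]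
  have "{c. \<exists>v. v \<noteq> 0 \<and> matrix (soft_risk_hessian lam S (t *\<^sub>R u 1)) *v v = c *\<^sub>R v}
      = critical_hessian_eigenvalue 1 ` I"
    using diag_eigenvalues[OF linear_soft_risk_hessian eig]
    by (simp add: matrix_vector_mul(2)[OF linear_soft_risk_hessian])
  then show "sigma_min (hessian (R_soft lam S) (t *\<^sub>R u 1)) = s"
    unfolding sigma_min_def hessian_R_soft[OF symmetric]
    using s_min(2,3) by (intro Min_eqI) auto
  show "s * (norm h)\<^sup>2 \<le> h \<bullet> soft_risk_hessian lam S (t *\<^sub>R u 1) h"
    by (rule diag_quadratic_form_lower_bound[OF linear_soft_risk_hessian eig s_min(2)])
qed

end

theorem proposition3:
  fixes lam :: real and S :: "real^'n^'n" and \<sigma> :: "nat \<Rightarrow> real"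
    and u :: "nat \<Rightarrow> real^'n" and \<mu>star :: "real^'n" and m :: "real \<Rightarrow> real^'n"
  defines "d \<equiv> CARD('n)"
  assumes d2: "d \<ge> 2"
    and lam: "lam > 0"
    and sym: "transpose S = S"
    and spec_dec: "\<And>i j. 1 \<le> i \<Longrightarrow> i < j \<Longrightarrow> j \<le> d \<Longrightarrow> \<sigma> i > \<sigma> j"
    and spec_pos: "\<sigma> d > 0"
    and eigvec: "\<And>i. 1 \<le> i \<Longrightarrow> i \<le> d \<Longrightarrow> S *v u i = \<sigma> i *\<^sub>R u i \<and> norm (u i) = 1"
    and star: "\<mu>star \<in> {(1 / sqrt (lam * \<sigma> 1)) *\<^sub>R u 1, - ((1 / sqrt (lam * \<sigma> 1)) *\<^sub>R u 1)}"
    and flow: "\<And>t. t \<ge> 0 \<Longrightarrow>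
        (m has_vector_derivative (- gradient (R_soft lam S) (m t))) (at t within {0..})"
    and conv: "(m \<longlongrightarrow> \<mu>star) at_top"
  shows "(\<forall>\<mu>0. gradient (R_soft lam S) \<mu>0 = 0 \<longrightarrow> lojasiewicz (R_soft lam S) (1/2) \<mu>0)
    \<and> (\<exists>t0\<ge>0. \<exists>s>0. \<forall>t\<ge>t0.
          R_soft lam S (m t) - R_soft lam S \<mu>star
            \<le> (R_soft lam S (m t0) - R_soft lam S \<mu>star) * exp (- s * (t - t0)))
    \<and> (let st = 2 * lam * min (\<sigma> 2 * (\<sigma> 1 - \<sigma> 2)) (\<sigma> d * (\<sigma> 1 - \<sigma> d)) in
         sigma_min (hessian (R_soft lam S) \<mu>star) = st \<and> st > 0 \<and>
         (\<exists>\<epsilon>0>0. \<forall>\<epsilon>. 0 < \<epsilon> \<and> \<epsilon> < \<epsilon>0 \<longrightarrow>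
            (\<exists>t0>0. (\<lambda>t. norm (m t - \<mu>star)) \<in> O[at_top](\<lambda>t. exp (- (st - \<epsilon>) * (t - t0))))))"
proof -
  interpret soft_risk S d \<sigma> u lam
    using sym spec_dec spec_pos eigvec lam d_def by unfold_locales auto
  obtain t where \<mu>star: "\<mu>star = t *\<^sub>R u 1" and crit: "lam * t\<^sup>2 * \<sigma> 1 = 1"
    using top_eigenvector_scaling[OF star] by blast
  define st where "st = 2 * lam * min (\<sigma> 2 * (\<sigma> 1 - \<sigma> 2)) (\<sigma> d * (\<sigma> 1 - \<sigma> d))"
  note gradient = gradient_R_soft[OF sym]
  note hessian = soft_risk_hessian_at_top[OF d2 crit, folded \<mu>star st_def]
    and st_pos = critical_hessian_eigenvalue_top_min(1)[OF d2, folded st_def]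
  have critical: "soft_risk_gradient lam S \<mu>star = 0"
    unfolding soft_risk_gradient_eq_0_iff \<mu>star using crit d2 by auto
  have value_decay: "\<exists>t0\<ge>0. \<exists>s>0. \<forall>t\<ge>t0. R_soft lam S (m t) - R_soft lam S \<mu>star
      \<le> (R_soft lam S (m t0) - R_soft lam S \<mu>star) * exp (- s * (t - t0))"
    using critical has_derivative_R_soft[OF sym]
    by (intro gradient_flow_value_decay flow conv lojasiewicz_at_critical_points)
      (simp_all add: gradient)
  have "\<exists>t0>0. (\<lambda>t. norm (m t - \<mu>star)) \<in> O[at_top](\<lambda>t. exp (- (st - \<epsilon>) * (t - t0)))"
    if "\<epsilon> > 0" for \<epsilon>
    using flow[unfolded gradient] conv critical has_derivative_soft_risk_gradient[OF sym]
      hessian(2) that by (rule gradient_flow_distance_decay)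
  then have distance_decay: "\<exists>\<epsilon>0>0. \<forall>\<epsilon>. 0 < \<epsilon> \<and> \<epsilon> < \<epsilon>0 \<longrightarrow>
      (\<exists>t0>0. (\<lambda>t. norm (m t - \<mu>star)) \<in> O[at_top](\<lambda>t. exp (- (st - \<epsilon>) * (t - t0))))"
    by (intro exI[of _ 1]) auto
  show ?thesis
    unfolding Let_def st_def[symmetric]
    using lojasiewicz_at_critical_points value_decay hessian(1) st_pos distance_decay by blast
qed

end
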